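(* Let $n\geqslant2$, $0<\varepsilon<1$, $i_0,j_0\in\{0,\dots,n\}$, $x_{i_0}\geqslant1$ and $y_{j_0}$ integers, $\boldsymbol{c}\in\mathbf{Z}^{n+1}$, $q\geqslant1$. For $\boldsymbol{x}=(x_i)\in\mathbf{Z}^{n+1}$ (with the given $x_{i_0}$) and $(a'_j)_{j\neq j_0}\in(\mathbf{Z}/q\mathbf{Z})^n$, let $\boldsymbol{a}'\in(\mathbf{Z}/q\mathbf{Z})^{n+1}$ have coordinates $a'_j$ ($j\neq j_0$) and $y_{j_0}\bmod q$ at $j_0$. Then for every $\eta>0$, \[\sum_{(x_i)_{i\neq i_0}\in\mathbf{Z}^n}\ \sum_{(a'_j)_{j\neq j_0}\in(\mathbf{Z}/q\mathbf{Z})^n}\underline{w}_\varepsilon(\boldsymbol{x})\,|S_q(\boldsymbol{x},\boldsymbol{a}')(\boldsymbol{c})|\ll q^{n+3+\eta}x_{i_0}^n,\] the implied constant depending only on $n,\varepsilon,\eta$.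
   Context: $e_q(x)=\exp(2i\pi x/q)$; $S_q(\boldsymbol{x},\boldsymbol{a}')(\boldsymbol{c})=\sum_{d\in(\mathbf{Z}/q\mathbf{Z})^*}\sum_{\boldsymbol{b}\in(\mathbf{Z}/q\mathbf{Z})^{n+1}}e_q\big(d\sum_kx_ka'_kb_k+\boldsymbol{c}.\boldsymbol{b}\big)$. $\omega_0(x)=\exp(-(1-x^2)^{-1})$ for $|x|<1$, $0$ otherwise; $c_0=\int\omega_0$; $\underline{\omega}_\varepsilon(x)=c_0^{-1}\int_{-\infty}^{x/\varepsilon-1}\omega_0(y)dy$; $\underline{w}_\varepsilon(\boldsymbol{x})=\prod_{i\neq i_0}\underline{\omega}_\varepsilon(1-\frac{|x_i|}{x_{i_0}})\underline{\omega}_\varepsilon(\frac{|x_i|}{x_{i_0}}-\frac1{x_{i_0}})$. *)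

theory Defs
  imports "HOL-Analysis.Analysis"
begin

definition eq :: "int \<Rightarrow> int \<Rightarrow> complex" where
  "eq q x = exp (2 * pi * \<i> * of_int x / of_int q)"

text \<open>Residues mod q represented by 0..q-1; units are those coprime to q.
  Vectors in Z^(n+1) / (Z/qZ)^(n+1) are functions on the index set {0..n}.\<close>
definition Sq :: "nat \<Rightarrow> int \<Rightarrow> (nat \<Rightarrow> int) \<Rightarrow> (nat \<Rightarrow> int) \<Rightarrow> (nat \<Rightarrow> int) \<Rightarrow> complex" where
  "Sq n q x a' c =
     (\<Sum>d\<in>{d\<in>{0..<q}. coprime d q}.
        \<Sum>b\<in>PiE {0..n} (\<lambda>_. {0..<q}).
          eq q (d * (\<Sum>k\<le>n. x k * a' k * b k) + (\<Sum>k\<le>n. c k * b k)))"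

definition omega0 :: "real \<Rightarrow> real" where
  "omega0 x = (if \<bar>x\<bar> < 1 then exp (- inverse (1 - x\<^sup>2)) else 0)"

definition c0 :: real where
  "c0 = integral UNIV omega0"

definition omega_low :: "real \<Rightarrow> real \<Rightarrow> real" where
  "omega_low \<epsilon> x = inverse c0 * integral {..x / \<epsilon> - 1} omega0"

definition w_low :: "nat \<Rightarrow> nat \<Rightarrow> real \<Rightarrow> (nat \<Rightarrow> int) \<Rightarrow> real" where
  "w_low n i0 \<epsilon> x =
     (\<Prod>i\<in>{0..n} - {i0}.
        omega_low \<epsilon> (1 - \<bar>real_of_int (x i)\<bar> / real_of_int (x i0))
      * omega_low \<epsilon> (\<bar>real_of_int (x i)\<bar> / real_of_int (x i0) - 1 / real_of_int (x i0)))"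

end

theory Submission
  imports Defs "HOL-Computational_Algebra.Primes"
begin

(*
  Expanding the sum over b coordinatewise, S_q(x, a')(c) is q^(n+1) times the number of units
  d mod q with q | d x_k a'_k + c_k for every k. For fixed d the k-th congruence has at most
  gcd(x_k, q) solutions a'_k, so the sum over a' is at most q^(n+2) times the product of the
  gcd(x_k, q). The weight is bounded and vanishes unless 0 < |x_i| <= x_(i0) for i <> i0, and
  the sum of gcd(v, q) over 0 < |v| <= X is at most 2 X tau(q), where tau(q) << q^(eta/n) by the
  divisor bound.
*)

definition divisor_count :: "nat \<Rightarrow> nat" where
  "divisor_count q = card {d. d dvd q}"

lemma divisor_count_mult_le:
  assumes "m > 0" "n > 0"
  shows "divisor_count (m * n) \<le> divisor_count m * divisor_count n"
proof -
  have "{d. d dvd m * n} \<subseteq> (\<lambda>(a, b). a * b) ` ({a. a dvd m} \<times> {b. b dvd n})"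
    by (auto elim!: dvd_productE)
  then have "divisor_count (m * n) \<le> card ((\<lambda>(a, b). a * b) ` ({a. a dvd m} \<times> {b. b dvd n}))"
    unfolding divisor_count_def using assms by (intro card_mono finite_imageI) auto
  also have "\<dots> \<le> card ({a. a dvd m} \<times> {b. b dvd n})"
    by (rule card_image_le) (use assms in auto)
  finally show ?thesis
    by (simp add: divisor_count_def card_cartesian_product)
qed

lemma divisor_count_prime_power:
  assumes "prime p"
  shows "divisor_count (p ^ a) = a + 1"
proof -
  have "{d. d dvd p ^ a} = (\<lambda>i. p ^ i) ` {..a}"
    using assms by (auto simp: divides_primepow_nat)
  moreover have "inj_on (\<lambda>i. p ^ i) {..a}"
    using assms prime_gt_1_nat by (auto intro: inj_onI simp: power_inject_exp)
  ultimately show ?thesis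
    unfolding divisor_count_def by (simp add: card_image)
qed

lemma linear_le_const_mult_power:
  fixes r :: real
  assumes "r > 1"
  obtains K where "K \<ge> 1" "\<And>a. real a + 1 \<le> K * r ^ a"
proof
  define K where "K = max 1 (1 / (r - 1))"
  show "K \<ge> 1" by (simp add: K_def)
  fix a :: nat
  have "K * (r - 1) \<ge> 1"
    using assms by (auto simp: K_def max_def field_simps)
  then have "real a \<le> real a * (K * (r - 1))"
    by (simp add: mult_le_cancel_left1)
  then have "real a + 1 \<le> K * (1 + real a * (r - 1))"
    using \<open>K \<ge> 1\<close> by (simp add: algebra_simps)
  also have "\<dots> \<le> K * r ^ a"
    using Bernoulli_inequality[of "r - 1" a] assms \<open>K \<ge> 1\<close> by (intro mult_left_mono) auto
  finally show "real a + 1 \<le> K * r ^ a" .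
qed

lemma prime_power_factorization_step:
  fixes q :: nat
  assumes "q > 1"
  obtains p a m where "prime p" "a > 0" "\<not> p dvd m" "q = p ^ a * m" "0 < m" "m < q"
proof -
  from assms have "q \<noteq> 1"
    by simp
  then obtain p where p: "prime p" "p dvd q"
    using prime_factor_nat by blast
  define a where "a = multiplicity p q"
  obtain m where qm: "q = p ^ a * m" and "\<not> p dvd m"
    using multiplicity_decompose'[of q p] assms prime_gt_1_nat[OF p(1)] unfolding a_def by auto
  have "a > 0"
    using p assms by (simp add: a_def prime_multiplicity_gt_zero_iff)
  have "m > 0"
    using assms qm by (auto intro: gr0I)
  have "1 < p ^ a"
    using prime_gt_1_nat[OF p(1)] \<open>a > 0\<close> by (rule one_less_power)
  then have "m < q"
    using \<open>m > 0\<close> qm by (metis mult_less_cancel2 mult_1)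
  show thesis
    using that p(1) \<open>a > 0\<close> \<open>\<not> p dvd m\<close> qm \<open>m > 0\<close> \<open>m < q\<close> .
qed

(* a + 1 <= 2^a <= p^(a delta) once p^delta >= 2, so only the finitely many primes with
   p^delta < 2 cost a constant factor. *)
lemma divisor_count_prime_power_le_powr:
  fixes \<delta> K :: real
  assumes "\<delta> > 0" "K \<ge> 1" "\<And>a. real a + 1 \<le> K * (2 powr \<delta>) ^ a" "prime p"
  shows "real (divisor_count (p ^ a)) \<le> (if real p powr \<delta> < 2 then K else 1) * real (p ^ a) powr \<delta>"
proof -
  have "real p \<ge> 2"
    using prime_ge_2_nat[OF \<open>prime p\<close>] by simp
  have "real (p ^ a) powr \<delta> = (real p powr \<delta>) ^ a"
    using \<open>real p \<ge> 2\<close> by (simp add: powr_realpow[symmetric] powr_powr powr_power mult.commute)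
  moreover have "real a + 1 \<le> (if real p powr \<delta> < 2 then K else 1) * (real p powr \<delta>) ^ a"
  proof (cases "real p powr \<delta> < 2")
    case True
    have "real a + 1 \<le> K * (2 powr \<delta>) ^ a"
      by (rule assms(3))
    also have "\<dots> \<le> K * (real p powr \<delta>) ^ a"
      using \<open>K \<ge> 1\<close> \<open>real p \<ge> 2\<close> \<open>\<delta> > 0\<close> by (intro mult_left_mono power_mono powr_mono2) auto
    finally show ?thesis
      using True by simp
  next
    case False
    have "a + 1 \<le> (2::nat) ^ a"
      using Suc_leI[OF less_exp[of a]] by simp
    then have "real a + 1 \<le> 2 ^ a"
      using of_nat_mono[where 'a=real] by fastforce
    also have "\<dots> \<le> (real p powr \<delta>) ^ a"
      using False by (intro power_mono) auto
    finally show ?thesis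
      using False by simp
  qed
  ultimately show ?thesis
    using \<open>prime p\<close> by (simp add: divisor_count_prime_power)
qed

lemma divisor_count_le_small_primes:
  fixes \<delta> K :: real
  assumes "\<delta> > 0" "K \<ge> 1" "\<And>a. real a + 1 \<le> K * (2 powr \<delta>) ^ a" "q > 0"
  shows "real (divisor_count q)
           \<le> K ^ card {p. prime p \<and> p dvd q \<and> real p powr \<delta> < 2} * real q powr \<delta>"
  using \<open>q > 0\<close>
proof (induction q rule: less_induct)
  case (less q)
  define S where "S = (\<lambda>q. {p. prime p \<and> p dvd q \<and> real p powr \<delta> < 2})"
  show ?case
  proof (cases "q = 1")
    case True
    then show ?thesis
      using \<open>K \<ge> 1\<close> by (simp add: divisor_count_def one_le_power)
  next
    case False
    then obtain p a m where p: "prime p" "a > 0" "\<not> p dvd m" and qm: "q = p ^ a * m" "0 < m" "m < q"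
      using less.prems prime_power_factorization_step[of q] by auto
    define c where "c = (if real p powr \<delta> < 2 then K else 1)"
    have "finite (S q)"
      by (rule finite_subset[of _ "{..q}"]) (use less.prems in \<open>auto simp: S_def dvd_imp_le\<close>)
    have "S m \<subseteq> S q"
      using qm by (auto simp: S_def)
    have "c * K ^ card (S m) \<le> K ^ card (S q)"
    proof (cases "real p powr \<delta> < 2")
      case True
      then have "S m \<subset> S q"
        using \<open>S m \<subseteq> S q\<close> p qm by (auto simp: S_def)
      then have "Suc (card (S m)) \<le> card (S q)"
        using \<open>finite (S q)\<close> by (simp add: psubset_card_mono Suc_leI)
      then show ?thesis
        using True \<open>K \<ge> 1\<close> power_increasing[of "Suc (card (S m))" "card (S q)" K] by (simp add: c_def)
    next
      case False
      then show ?thesis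
        using \<open>K \<ge> 1\<close> \<open>S m \<subseteq> S q\<close> \<open>finite (S q)\<close> by (simp add: c_def power_increasing card_mono)
    qed
    have "real (divisor_count q) \<le> real (divisor_count (p ^ a)) * real (divisor_count m)"
      using divisor_count_mult_le[of "p ^ a" m] prime_gt_0_nat[OF p(1)] qm by (simp flip: of_nat_mult)
    also have "\<dots> \<le> (c * real (p ^ a) powr \<delta>) * (K ^ card (S m) * real m powr \<delta>)"
      using divisor_count_prime_power_le_powr[OF assms(1-3) p(1)] less.IH[OF \<open>m < q\<close> \<open>m > 0\<close>] \<open>K \<ge> 1\<close>
      by (intro mult_mono) (auto simp: c_def S_def)
    also have "\<dots> = (c * K ^ card (S m)) * real q powr \<delta>"
      using qm by (simp add: powr_mult mult_ac)
    also have "\<dots> \<le> K ^ card (S q) * real q powr \<delta>"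
      using \<open>c * K ^ card (S m) \<le> K ^ card (S q)\<close> by (intro mult_right_mono) auto
    finally show ?thesis
      by (simp add: S_def)
  qed
qed

lemma divisor_count_le_powr:
  fixes \<delta> :: real
  assumes "\<delta> > 0"
  obtains C where "\<And>q. q > 0 \<Longrightarrow> real (divisor_count q) \<le> C * real q powr \<delta>"
proof -
  obtain K where "K \<ge> 1" and K: "\<And>a. real a + 1 \<le> K * (2 powr \<delta>) ^ a"
    using linear_le_const_mult_power[of "2 powr \<delta>"] assms by auto
  define N where "N = nat \<lceil>2 powr (1 / \<delta>)\<rceil>"
  have "real (divisor_count q) \<le> K ^ N * real q powr \<delta>" if "q > 0" for q
  proof -
    have "{p. prime p \<and> p dvd q \<and> real p powr \<delta> < 2} \<subseteq> {..<N}"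
    proof
      fix p assume "p \<in> {p. prime p \<and> p dvd q \<and> real p powr \<delta> < 2}"
      then have "real p = (real p powr \<delta>) powr (1 / \<delta>)" "real p powr \<delta> < 2"
        using assms by (auto simp: powr_powr)
      then have "real p < 2 powr (1 / \<delta>)"
        using assms by (metis powr_less_mono2 powr_ge_zero zero_less_divide_1_iff)
      also have "\<dots> \<le> of_int \<lceil>2 powr (1 / \<delta>)\<rceil>"
        by (rule le_of_int_ceiling)
      finally have "int p < \<lceil>2 powr (1 / \<delta>)\<rceil>"
        by linarith
      then show "p \<in> {..<N}"
        unfolding N_def by simp
    qed
    then have "K ^ card {p. prime p \<and> p dvd q \<and> real p powr \<delta> < 2} \<le> K ^ N"
      using \<open>K \<ge> 1\<close> by (intro power_increasing) (auto dest: card_mono[rotated])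
    then show ?thesis
      using divisor_count_le_small_primes[OF assms \<open>K \<ge> 1\<close> K \<open>q > 0\<close>]
      by (meson mult_right_mono order_trans powr_ge_zero)
  qed
  then show ?thesis
    using that by blast
qed

lemma omega0_eq_0: "\<bar>x\<bar> \<ge> 1 \<Longrightarrow> omega0 x = 0"
  by (simp add: omega0_def)

lemma abs_omega0_le_1: "\<bar>omega0 x\<bar> \<le> 1"
proof (cases "\<bar>x\<bar> < 1")
  case True
  then have "inverse (1 - x\<^sup>2) > 0"
    by (simp add: abs_square_less_1)
  then show ?thesis
    using True by (simp add: omega0_def)
qed (simp add: omega0_def)

lemma abs_integral_omega0_le: "\<bar>integral {..u} omega0\<bar> \<le> 2"
proof -
  have "(\<lambda>x. if x \<in> {..u} then omega0 x else 0) = (\<lambda>x. if x \<in> {-1..min u 1} then omega0 x else 0)"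
    by (auto simp: fun_eq_iff omega0_eq_0)
  then have "integral {..u} omega0 = integral {-1..min u 1} omega0"
    by (metis integral_restrict_UNIV)
  also have "\<bar>\<dots>\<bar> \<le> integral {-1..min u 1} (\<lambda>_. 1::real)"
  proof (cases "omega0 integrable_on {-1..min u 1}")
    case True
    have "norm (integral {-1..min u 1} omega0) \<le> integral {-1..min u 1} (\<lambda>_. 1::real)"
      by (rule integral_norm_bound_integral[OF True]) (auto simp: abs_omega0_le_1)
    then show ?thesis
      by simp
  qed (auto simp: not_integrable_integral) \<comment> \<open>otherwise the integral is the junk value 0\<close>
  also have "\<dots> \<le> 2"
    by (simp add: content_real)
  finally show ?thesis .
qed

lemma omega_low_eq_0:
  assumes "\<epsilon> > 0" "t \<le> 0"
  shows "omega_low \<epsilon> t = 0"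
proof -
  have "t / \<epsilon> - 1 \<le> -1"
    using assms by (simp add: divide_nonpos_pos)
  then have "(\<lambda>x. if x \<in> {..t / \<epsilon> - 1} then omega0 x else 0) = (\<lambda>x. 0)"
    by (auto simp: fun_eq_iff omega0_eq_0)
  then have "integral {..t / \<epsilon> - 1} omega0 = 0"
    by (metis integral_restrict_UNIV integral_0)
  then show ?thesis
    by (simp add: omega_low_def)
qed

lemma abs_omega_low_le: "\<bar>omega_low \<epsilon> t\<bar> \<le> 2 * \<bar>inverse c0\<bar>"
  using abs_integral_omega0_le[of "t / \<epsilon> - 1"]
  by (simp add: omega_low_def abs_mult mult.commute mult_left_mono)

lemma abs_w_low_le:
  assumes "i0 \<le> n"
  shows "\<bar>w_low n i0 \<epsilon> x\<bar> \<le> (2 * \<bar>inverse c0\<bar>) ^ (2 * n)"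
proof -
  have "\<bar>w_low n i0 \<epsilon> x\<bar> \<le> (\<Prod>i\<in>{0..n} - {i0}. (2 * \<bar>inverse c0\<bar>) ^ 2)"
    unfolding w_low_def abs_prod abs_mult power2_eq_square
    by (intro prod_mono conjI mult_mono abs_omega_low_le) auto
  also have "\<dots> = (2 * \<bar>inverse c0\<bar>) ^ (2 * n)"
    using assms by (simp add: power_mult)
  finally show ?thesis .
qed

lemma w_low_support:
  assumes "w_low n i0 \<epsilon> x \<noteq> 0" "\<epsilon> > 0" "x i0 \<ge> 1" "i \<in> {0..n} - {i0}"
  shows "x i \<noteq> 0 \<and> \<bar>x i\<bar> \<le> x i0"
proof (rule ccontr)
  assume "\<not> (x i \<noteq> 0 \<and> \<bar>x i\<bar> \<le> x i0)"
  then consider "x i = 0" | "\<bar>x i\<bar> > x i0"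
    by linarith
  then have "omega_low \<epsilon> (1 - \<bar>real_of_int (x i)\<bar> / x i0)
           * omega_low \<epsilon> (\<bar>real_of_int (x i)\<bar> / x i0 - 1 / x i0) = 0"
  proof cases
    case 1
    then show ?thesis
      using omega_low_eq_0[OF \<open>\<epsilon> > 0\<close>, of "- 1 / x i0"] \<open>x i0 \<ge> 1\<close> by simp
  next
    case 2
    then have "1 - \<bar>real_of_int (x i)\<bar> / x i0 \<le> 0"
      using \<open>x i0 \<ge> 1\<close> by (simp add: field_simps)
    then show ?thesis
      using omega_low_eq_0[OF \<open>\<epsilon> > 0\<close>] by simp
  qed
  then have "w_low n i0 \<epsilon> x = 0"
    unfolding w_low_def using assms(4) by (intro prod_zero) auto
  then show False
    using assms(1) by contradiction
qed

lemma w_low_eq_0_outside_box: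
  assumes "\<epsilon> > 0" "X \<ge> 1" "i0 \<le> n"
    and "x \<in> PiE {0..n} (\<lambda>i. if i = i0 then {X} else UNIV)"
    and "x \<notin> PiE {0..n} (\<lambda>i. if i = i0 then {X} else {-X..X} - {0})"
  shows "w_low n i0 \<epsilon> x = 0"
proof (rule ccontr)
  assume "w_low n i0 \<epsilon> x \<noteq> 0"
  have "x i0 = X"
    using PiE_mem[OF assms(4), of i0] assms(3) by simp
  have "x i \<in> (if i = i0 then {X} else {-X..X} - {0})" if "i \<in> {0..n}" for i
  proof (cases "i = i0")
    case False
    then show ?thesis
      using w_low_support[OF \<open>w_low n i0 \<epsilon> x \<noteq> 0\<close> assms(1), of i] that \<open>x i0 = X\<close> assms(2)
      by (auto simp: abs_le_iff)
  qed (simp add: \<open>x i0 = X\<close>)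
  then show False
    using assms(4,5) by (auto simp: PiE_iff)
qed

lemma eq_add: "eq q (s + t) = eq q s * eq q t"
  unfolding eq_def by (simp add: add_divide_distrib distrib_left exp_add)

lemma eq_sum: "finite K \<Longrightarrow> eq q (\<Sum>k\<in>K. f k) = (\<Prod>k\<in>K. eq q (f k))"
  by (induction K rule: finite_induct) (auto simp: eq_add, simp add: eq_def)

lemma eq_mult_of_nat: "eq q (t * int m) = eq q t ^ m"
proof -
  have "2 * pi * \<i> * of_int (t * int m) / of_int q = of_nat m * (2 * pi * \<i> * of_int t / of_int q)"
    by simp
  then show ?thesis
    unfolding eq_def by (simp only: exp_of_nat_mult)
qed

lemma eq_eq_1_iff:
  assumes "q \<noteq> 0"
  shows "eq q t = 1 \<longleftrightarrow> q dvd t"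
proof
  assume "eq q t = 1"
  then obtain m :: int where "Im (2 * pi * \<i> * of_int t / of_int q) = of_int (2 * m) * pi"
    unfolding eq_def exp_eq_1 by blast
  then have "2 * pi * (of_int t / of_int q) = 2 * pi * (of_int m :: real)"
    by simp
  then have "(of_int t / of_int q :: real) = of_int m"
    by (metis mult_cancel_left mult_eq_0_iff pi_neq_zero zero_neq_numeral)
  then have "t = m * q"
    using assms by (simp add: divide_eq_eq flip: of_int_mult)
  then show "q dvd t"
    by simp
next
  assume "q dvd t"
  then obtain m where "t = q * m" ..
  then have "2 * pi * \<i> * of_int t / of_int q = of_int m * (2 * pi * \<i>)"
    using assms by simp
  then show "eq q t = 1"
    unfolding eq_def by (simp add: exp_eq_1)
qed

lemma sum_eq_mult_of_bool_dvd:
  assumes "q \<ge> 1"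
  shows "(\<Sum>b\<in>{0..<q}. eq q (t * b)) = of_bool (q dvd t) * of_int q"
proof (cases "q dvd t")
  case True
  then have "eq q (t * b) = 1" for b
    using assms by (simp add: eq_eq_1_iff)
  then show ?thesis
    using True assms by simp
next
  case False
  define N where "N = nat q"
  have "{0..<q} = int ` {..<N}"
    unfolding N_def using assms by (simp add: image_int_atLeastLessThan atLeast0LessThan[symmetric])
  then have "(\<Sum>b\<in>{0..<q}. eq q (t * b)) = (\<Sum>m<N. eq q t ^ m)"
    by (simp add: sum.reindex eq_mult_of_nat)
  also have "\<dots> = (eq q t ^ N - 1) / (eq q t - 1)"
    using False assms by (intro geometric_sum) (simp add: eq_eq_1_iff)
  also have "eq q t ^ N = 1"
    using assms by (simp add: eq_eq_1_iff N_def flip: eq_mult_of_nat)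
  finally show ?thesis
    using False by simp
qed

lemma prod_of_bool:
  "finite K \<Longrightarrow> (\<Prod>k\<in>K. of_bool (P k) :: 'a::comm_semiring_1) = of_bool (\<forall>k\<in>K. P k)"
  by (induction K rule: finite_induct) auto

lemma Sq_eq_card:
  assumes "q \<ge> 1"
  shows "Sq n q x a c = of_int q ^ Suc n
           * of_nat (card {d\<in>{0..<q}. coprime d q \<and> (\<forall>k\<in>{0..n}. q dvd d * x k * a k + c k)})"
proof -
  define P where "P d \<longleftrightarrow> (\<forall>k\<in>{0..n}. q dvd d * x k * a k + c k)" for d
  have inner: "(\<Sum>b\<in>PiE {0..n} (\<lambda>_. {0..<q}). eq q (d * (\<Sum>k\<le>n. x k * a k * b k) + (\<Sum>k\<le>n. c k * b k)))
          = of_int q ^ Suc n * of_bool (\<forall>k\<in>{0..n}. q dvd d * x k * a k + c k)" for d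
  proof -
    have "d * (\<Sum>k\<le>n. x k * a k * b k) + (\<Sum>k\<le>n. c k * b k) = (\<Sum>k\<in>{0..n}. (d * x k * a k + c k) * b k)" for b
      by (simp add: sum_distrib_left atLeast0AtMost algebra_simps flip: sum.distrib)
    then have "(\<Sum>b\<in>PiE {0..n} (\<lambda>_. {0..<q}). eq q (d * (\<Sum>k\<le>n. x k * a k * b k) + (\<Sum>k\<le>n. c k * b k)))
          = (\<Sum>b\<in>PiE {0..n} (\<lambda>_. {0..<q}). \<Prod>k\<in>{0..n}. eq q ((d * x k * a k + c k) * b k))"
      by (simp add: eq_sum)
    also have "\<dots> = (\<Prod>k\<in>{0..n}. \<Sum>b\<in>{0..<q}. eq q ((d * x k * a k + c k) * b))"
      by (rule prod_sum_PiE[symmetric]) auto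
    also have "\<dots> = (\<Prod>k\<in>{0..n}. of_bool (q dvd d * x k * a k + c k) * of_int q)"
      using assms by (simp add: sum_eq_mult_of_bool_dvd)
    finally show ?thesis
      by (simp add: prod.distrib prod_of_bool mult.commute)
  qed
  have finite_units: "finite {d\<in>{0..<q}. coprime d q}"
    by (rule finite_subset[where B="{0..<q}"]) auto
  have "Sq n q x a c = of_int q ^ Suc n * (\<Sum>d\<in>{d\<in>{0..<q}. coprime d q}. of_bool (P d))"
    unfolding Sq_def P_def inner by (simp add: sum_distrib_left)
  also have "(\<Sum>d\<in>{d\<in>{0..<q}. coprime d q}. of_bool (P d)) = of_nat (card ({d\<in>{0..<q}. coprime d q} \<inter> {d. P d}))"
    using sum_of_bool_eq[OF finite_units finite_units] .
  also have "{d\<in>{0..<q}. coprime d q} \<inter> {d. P d} = {d\<in>{0..<q}. coprime d q \<and> P d}"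
    by blast
  finally show ?thesis
    by (simp add: P_def)
qed

lemma dvd_mult_imp_div_gcd_dvd:
  fixes q u z :: int
  assumes "q \<noteq> 0" "q dvd u * z"
  shows "q div gcd u q dvd z"
proof -
  define g where "g = gcd u q"
  have "g \<noteq> 0"
    using assms(1) by (simp add: g_def)
  have "q div g * g dvd (u div g * z) * g"
    using assms(2) by (simp add: g_def ac_simps)
  then have "q div g dvd u div g * z"
    using \<open>g \<noteq> 0\<close> by simp
  moreover have "coprime (q div g) (u div g)"
    using div_gcd_coprime[of u q] assms(1) by (simp add: g_def coprime_commute)
  ultimately show ?thesis
    by (simp add: g_def coprime_dvd_mult_right_iff)
qed

lemma card_pairwise_cong_le:
  fixes m g :: int
  assumes "m > 0" "g \<ge> 0" "A \<subseteq> {0..<g * m}" "\<And>a b. a \<in> A \<Longrightarrow> b \<in> A \<Longrightarrow> m dvd a - b"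
  shows "int (card A) \<le> g"
proof -
  have "inj_on (\<lambda>a. a div m) A"
  proof (intro inj_onI)
    fix a b
    assume "a \<in> A" "b \<in> A" "a div m = b div m"
    moreover from this have "a mod m = b mod m"
      using assms(4) by (simp add: mod_eq_dvd_iff)
    ultimately show "a = b"
      by (metis div_mult_mod_eq)
  qed
  moreover have "(\<lambda>a. a div m) ` A \<subseteq> {0..<g}"
  proof (intro image_subsetI)
    fix a
    assume "a \<in> A"
    then have "0 \<le> a" "a < g * m"
      using assms(3) by auto
    moreover have "a div m * m \<le> a"
      using \<open>m > 0\<close> by (simp add: minus_mod_eq_div_mult[symmetric])
    ultimately have "a div m * m < g * m"
      by linarith
    then show "a div m \<in> {0..<g}"
      using \<open>m > 0\<close> \<open>0 \<le> a\<close> by (simp add: pos_imp_zdiv_nonneg_iff)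
  qed
  then have "card ((\<lambda>a. a div m) ` A) \<le> card {0..<g}"
    by (intro card_mono) auto
  ultimately show ?thesis
    using assms(2) by (simp add: card_image le_nat_iff)
qed

lemma card_linear_congruence_le_gcd:
  fixes q u c :: int
  assumes "q \<ge> 1"
  shows "int (card {a\<in>{0..<q}. q dvd u * a + c}) \<le> gcd u q"
proof (rule card_pairwise_cong_le)
  show "q div gcd u q > 0" "gcd u q \<ge> 0"
    using assms by (auto simp: pos_imp_zdiv_pos_iff zdvd_imp_le)
  show "{a\<in>{0..<q}. q dvd u * a + c} \<subseteq> {0..<gcd u q * (q div gcd u q)}"
    by auto
  fix a b
  assume "a \<in> {a\<in>{0..<q}. q dvd u * a + c}" "b \<in> {a\<in>{0..<q}. q dvd u * a + c}"
  then have "q dvd (u * a + c) - (u * b + c)"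
    by (intro dvd_diff) auto
  then have "q dvd u * (a - b)"
    by (simp add: algebra_simps)
  then show "q div gcd u q dvd a - b"
    using assms by (intro dvd_mult_imp_div_gcd_dvd) auto
qed

lemma card_PiE_filter:
  assumes "finite I"
  shows "card {f\<in>PiE I A. \<forall>i\<in>I. P i (f i)} = (\<Prod>i\<in>I. card {x\<in>A i. P i x})"
proof -
  have "{f\<in>PiE I A. \<forall>i\<in>I. P i (f i)} = PiE I (\<lambda>i. {x\<in>A i. P i x})"
    by (auto simp: PiE_iff extensional_def)
  then show ?thesis
    using assms by (simp add: card_PiE)
qed

lemma sum_card_filter_swap:
  "finite A \<Longrightarrow> finite B \<Longrightarrow> (\<Sum>a\<in>A. card {b\<in>B. R a b}) = (\<Sum>b\<in>B. card {a\<in>A. R a b})"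
  using sum.swap[of "\<lambda>a b. of_bool (R a b) :: nat" B A] by (simp add: Int_def)

lemma sum_norm_Sq_le:
  assumes "q \<ge> 1"
  shows "(\<Sum>a\<in>PiE {0..n} (\<lambda>_. {0..<q}). cmod (Sq n q x a c))
           \<le> real_of_int q ^ (n + 2) * (\<Prod>k\<in>{0..n}. real_of_int (gcd (x k) q))"
proof -
  define U where "U = {d\<in>{0..<q}. coprime d q}"
  define P where "P d k b \<longleftrightarrow> q dvd d * x k * b + c k" for d k b
  have "finite U"
    unfolding U_def by (rule finite_subset[where B="{0..<q}"]) auto
  have "(\<Sum>a\<in>PiE {0..n} (\<lambda>_. {0..<q}). cmod (Sq n q x a c))
      = real_of_int q ^ Suc n * real (\<Sum>a\<in>PiE {0..n} (\<lambda>_. {0..<q}). card {d\<in>U. \<forall>k\<in>{0..n}. P d k (a k)})"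
    using assms by (simp add: Sq_eq_card norm_mult norm_power sum_distrib_left U_def P_def conj_assoc)
  also have "(\<Sum>a\<in>PiE {0..n} (\<lambda>_. {0..<q}). card {d\<in>U. \<forall>k\<in>{0..n}. P d k (a k)})
      = (\<Sum>d\<in>U. card {a\<in>PiE {0..n} (\<lambda>_. {0..<q}). \<forall>k\<in>{0..n}. P d k (a k)})"
    using \<open>finite U\<close> by (intro sum_card_filter_swap finite_PiE) auto
  also have "\<dots> = (\<Sum>d\<in>U. \<Prod>k\<in>{0..n}. card {b\<in>{0..<q}. P d k b})"
    by (simp add: card_PiE_filter)
  also have "real (\<Sum>d\<in>U. \<Prod>k\<in>{0..n}. card {b\<in>{0..<q}. P d k b})
      \<le> (\<Sum>d\<in>U. \<Prod>k\<in>{0..n}. real_of_int (gcd (x k) q))"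
    unfolding of_nat_sum of_nat_prod
  proof (intro sum_mono prod_mono conjI)
    fix d k
    assume "d \<in> U"
    then have "gcd (d * x k) q = gcd (x k) q"
      by (simp add: U_def gcd_mult_left_left_cancel coprime_commute)
    then show "real (card {b\<in>{0..<q}. P d k b}) \<le> real_of_int (gcd (x k) q)"
      using card_linear_congruence_le_gcd[OF assms, of "d * x k" "c k"] unfolding P_def by linarith
  qed auto
  also have "\<dots> = real (card U) * (\<Prod>k\<in>{0..n}. real_of_int (gcd (x k) q))"
    by simp
  also have "\<dots> \<le> real_of_int q * (\<Prod>k\<in>{0..n}. real_of_int (gcd (x k) q))"
  proof -
    have "card U \<le> card {0..<q}"
      unfolding U_def by (intro card_mono) auto
    then show ?thesis
      using assms by (intro mult_right_mono prod_nonneg) auto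
  qed
  finally show ?thesis
    using assms by (simp add: mult_left_mono mult_ac)
qed

lemma sum_w_low_norm_Sq_le:
  assumes "i0 \<le> n" "q \<ge> 1"
  shows "(\<Sum>a\<in>PiE {0..n} (\<lambda>j. if j = j0 then {Y mod q} else {0..<q}). w_low n i0 \<epsilon> x * cmod (Sq n q x a c))
           \<le> (2 * \<bar>inverse c0\<bar>) ^ (2 * n) * (real_of_int q ^ (n + 2) * (\<Prod>k\<in>{0..n}. real_of_int (gcd (x k) q)))"
proof -
  have "(\<Sum>a\<in>PiE {0..n} (\<lambda>j. if j = j0 then {Y mod q} else {0..<q}). w_low n i0 \<epsilon> x * cmod (Sq n q x a c))
      \<le> \<bar>w_low n i0 \<epsilon> x\<bar> * (\<Sum>a\<in>PiE {0..n} (\<lambda>j. if j = j0 then {Y mod q} else {0..<q}). cmod (Sq n q x a c))"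
    by (simp add: sum_distrib_left[symmetric] mult_right_mono sum_nonneg)
  also have "\<dots> \<le> \<bar>w_low n i0 \<epsilon> x\<bar> * (\<Sum>a\<in>PiE {0..n} (\<lambda>_. {0..<q}). cmod (Sq n q x a c))"
    using assms(2) by (intro mult_left_mono sum_mono2 finite_PiE PiE_mono) auto
  also have "\<dots> \<le> (2 * \<bar>inverse c0\<bar>) ^ (2 * n) * (real_of_int q ^ (n + 2) * (\<Prod>k\<in>{0..n}. real_of_int (gcd (x k) q)))"
    using assms by (intro mult_mono abs_w_low_le sum_norm_Sq_le sum_nonneg) auto
  finally show ?thesis .
qed

lemma card_nonzero_multiples_le:
  fixes d X :: int
  assumes "d \<ge> 1" "X \<ge> 0"
  shows "d * int (card {v\<in>{-X..X} - {0}. d dvd v}) \<le> 2 * X"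
proof -
  define M where "M = X div d"
  have "{v\<in>{-X..X} - {0}. d dvd v} \<subseteq> (\<lambda>k. d * k) ` ({-M..M} - {0})"
  proof
    fix v
    assume v: "v \<in> {v\<in>{-X..X} - {0}. d dvd v}"
    then obtain k where "v = d * k"
      by blast
    moreover have "\<bar>k\<bar> * d \<le> X"
      using v \<open>v = d * k\<close> assms by (auto simp: abs_mult mult.commute)
    then have "\<bar>k\<bar> \<le> M"
      unfolding M_def using assms by (metis zdiv_mono1 nonzero_mult_div_cancel_right not_one_le_zero order_less_le_trans zero_less_one)
    moreover have "k \<noteq> 0"
      using v \<open>v = d * k\<close> by auto
    ultimately show "v \<in> (\<lambda>k. d * k) ` ({-M..M} - {0})"
      by (intro image_eqI[of v _ k]) auto
  qed
  then have "card {v\<in>{-X..X} - {0}. d dvd v} \<le> card ({-M..M} - {0::int})"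
    by (meson card_image_le card_mono finite_Diff finite_atLeastAtMost_int finite_imageI order_trans)
  also have "\<dots> = 2 * nat M"
    by (cases "M \<ge> 0") auto
  finally have "int (card {v\<in>{-X..X} - {0}. d dvd v}) \<le> int (2 * nat M)"
    by (simp only: of_nat_le_iff)
  also have "\<dots> = 2 * M"
    using assms by (simp add: M_def pos_imp_zdiv_nonneg_iff)
  finally have "d * int (card {v\<in>{-X..X} - {0}. d dvd v}) \<le> d * (2 * M)"
    using assms by (intro mult_left_mono) auto
  also have "\<dots> \<le> 2 * X"
  proof -
    have "X div d * d \<le> X"
      using pos_mod_sign[of d X] assms by (simp add: minus_mod_eq_div_mult[symmetric])
    then show ?thesis
      by (simp add: M_def algebra_simps)
  qed
  finally show ?thesis .
qed

lemma sum_gcd_le_divisor_count: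
  fixes q X :: int
  assumes "q \<ge> 1" "X \<ge> 0"
  shows "(\<Sum>v\<in>{-X..X} - {0}. real_of_int (gcd v q)) \<le> 2 * real_of_int X * real (divisor_count (nat q))"
proof -
  define E where "E = {e. e dvd nat q}"
  have "finite E"
    using assms by (simp add: E_def finite_divisors_nat)
  have gcd_le: "real_of_int (gcd v q) \<le> (\<Sum>e\<in>E. of_bool (int e dvd v) * real e)" for v
  proof -
    have "nat (gcd v q) \<in> E"
      using assms by (simp add: E_def nat_dvd_iff)
    have "real_of_int (gcd v q) = of_bool (int (nat (gcd v q)) dvd v) * real (nat (gcd v q))"
      by simp
    also have "\<dots> \<le> (\<Sum>e\<in>E. of_bool (int e dvd v) * real e)"
      by (rule member_le_sum) (use \<open>nat (gcd v q) \<in> E\<close> \<open>finite E\<close> in auto)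
    finally show ?thesis .
  qed
  have "(\<Sum>v\<in>{-X..X} - {0}. real_of_int (gcd v q))
      \<le> (\<Sum>v\<in>{-X..X} - {0}. \<Sum>e\<in>E. of_bool (int e dvd v) * real e)"
    by (intro sum_mono gcd_le)
  also have "\<dots> = (\<Sum>e\<in>E. real e * real (card {v\<in>{-X..X} - {0}. int e dvd v}))"
    by (subst sum.swap) (simp add: sum_distrib_left[symmetric] Int_def mult.commute)
  also have "\<dots> \<le> (\<Sum>e\<in>E. 2 * real_of_int X)"
  proof (intro sum_mono)
    fix e
    assume "e \<in> E"
    then have "e > 0"
      using assms by (cases "e = 0") (auto simp: E_def)
    then have "int e * int (card {v\<in>{-X..X} - {0}. int e dvd v}) \<le> 2 * X"
      using assms by (intro card_nonzero_multiples_le) auto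
    then have "real_of_int (int e * int (card {v\<in>{-X..X} - {0}. int e dvd v})) \<le> real_of_int (2 * X)"
      by (simp only: of_int_le_iff)
    then show "real e * real (card {v\<in>{-X..X} - {0}. int e dvd v}) \<le> 2 * real_of_int X"
      by simp
  qed
  also have "\<dots> = 2 * real_of_int X * real (divisor_count (nat q))"
    by (simp add: E_def divisor_count_def)
  finally show ?thesis .
qed

lemma sum_prod_gcd_le:
  fixes q X :: int
  assumes "q \<ge> 1" "X \<ge> 0" "i0 \<le> n"
  shows "(\<Sum>x\<in>PiE {0..n} (\<lambda>i. if i = i0 then {X} else {-X..X} - {0}). \<Prod>k\<in>{0..n}. real_of_int (gcd (x k) q))
           \<le> real_of_int q * (2 * real_of_int X * real (divisor_count (nat q))) ^ n"
proof -
  have "(\<Sum>x\<in>PiE {0..n} (\<lambda>i. if i = i0 then {X} else {-X..X} - {0}). \<Prod>k\<in>{0..n}. real_of_int (gcd (x k) q))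
      = (\<Prod>k\<in>{0..n}. \<Sum>v\<in>(if k = i0 then {X} else {-X..X} - {0}). real_of_int (gcd v q))"
    by (rule prod_sum_PiE[symmetric]) auto
  also have "\<dots> = real_of_int (gcd X q) * (\<Sum>v\<in>{-X..X} - {0}. real_of_int (gcd v q)) ^ n"
    using assms by (simp add: prod.remove[of "{0..n}" i0])
  also have "\<dots> \<le> real_of_int q * (2 * real_of_int X * real (divisor_count (nat q))) ^ n"
    using assms by (intro mult_mono power_mono sum_gcd_le_divisor_count zero_le_power sum_nonneg) (auto simp: zdvd_imp_le)
  finally show ?thesis .
qed

lemma sum_w_low_Sq_le:
  fixes \<epsilon> :: real and n i0 j0 :: nat and X Y q :: int and c :: "nat \<Rightarrow> int"
  assumes "\<epsilon> > 0" "i0 \<le> n" "X \<ge> 1" "q \<ge> 1"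
  defines "F \<equiv> \<lambda>x. \<Sum>a'\<in>PiE {0..n} (\<lambda>j. if j = j0 then {Y mod q} else {0..<q}).
                    w_low n i0 \<epsilon> x * cmod (Sq n q x a' c)"
      and "A \<equiv> PiE {0..n} (\<lambda>i. if i = i0 then {X} else UNIV)"
  shows "F summable_on A \<and>
         infsum F A \<le> (2 * \<bar>inverse c0\<bar>) ^ (2 * n) * real_of_int q ^ (n + 3)
                        * (2 * real_of_int X * real (divisor_count (nat q))) ^ n"
proof -
  define Box where "Box = PiE {0..n} (\<lambda>i. if i = i0 then {X} else {-X..X} - {0})"
  have "finite Box"
    unfolding Box_def by (intro finite_PiE) auto
  have "Box \<subseteq> A"
    unfolding Box_def A_def by (intro PiE_mono) auto
  have outside: "F x = 0" if "x \<in> A - Box" for x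
    using w_low_eq_0_outside_box[OF assms(1,3,2), of x] that by (simp add: F_def A_def Box_def)
  have "F summable_on A"
    using summable_on_cong_neutral[of A Box F F] outside \<open>Box \<subseteq> A\<close> \<open>finite Box\<close> by auto
  have "infsum F A = infsum F Box"
    by (rule infsum_cong_neutral) (use outside \<open>Box \<subseteq> A\<close> in auto)
  then have "infsum F A = sum F Box"
    using \<open>finite Box\<close> by simp
  have "F x \<le> (2 * \<bar>inverse c0\<bar>) ^ (2 * n) * (real_of_int q ^ (n + 2) * (\<Prod>k\<in>{0..n}. real_of_int (gcd (x k) q)))" for x
    unfolding F_def using assms(2,4) by (rule sum_w_low_norm_Sq_le)
  then have "sum F Box \<le> (2 * \<bar>inverse c0\<bar>) ^ (2 * n) * real_of_int q ^ (n + 2)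
      * (\<Sum>x\<in>Box. \<Prod>k\<in>{0..n}. real_of_int (gcd (x k) q))"
    by (simp add: sum_mono sum_distrib_left mult.assoc)
  also have "\<dots> \<le> (2 * \<bar>inverse c0\<bar>) ^ (2 * n) * real_of_int q ^ (n + 2)
      * (real_of_int q * (2 * real_of_int X * real (divisor_count (nat q))) ^ n)"
    unfolding Box_def using assms by (intro mult_left_mono sum_prod_gcd_le) auto
  also have "\<dots> = (2 * \<bar>inverse c0\<bar>) ^ (2 * n) * real_of_int q ^ (n + 3)
      * (2 * real_of_int X * real (divisor_count (nat q))) ^ n"
    by (simp add: power_add power2_eq_square power3_eq_cube mult_ac)
  finally show ?thesis
    using \<open>F summable_on A\<close> \<open>infsum F A = sum F Box\<close> by simp
qed

lemma divisor_count_bound_power_le_powr: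
  fixes \<delta> Cd :: real and X q :: int
  assumes "\<And>q. q > 0 \<Longrightarrow> real (divisor_count q) \<le> Cd * real q powr \<delta>" "X \<ge> 1" "q \<ge> 1"
  shows "real_of_int q ^ (n + 3) * (2 * real_of_int X * real (divisor_count (nat q))) ^ n
           \<le> (2 * Cd) ^ n * real_of_int q powr (real n + 3 + real n * \<delta>) * real_of_int X ^ n"
proof -
  have "real (divisor_count (nat q)) \<le> Cd * real_of_int q powr \<delta>"
    using assms(1)[of "nat q"] \<open>q \<ge> 1\<close> by simp
  then have "real_of_int q ^ (n + 3) * (2 * real_of_int X * real (divisor_count (nat q))) ^ n
      \<le> real_of_int q ^ (n + 3) * (2 * real_of_int X * (Cd * real_of_int q powr \<delta>)) ^ n"
    using assms(2,3) by (intro mult_left_mono power_mono) auto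
  also have "\<dots> = (2 * Cd) ^ n * (real_of_int q ^ (n + 3) * (real_of_int q powr \<delta>) ^ n) * real_of_int X ^ n"
    by (simp add: power_mult_distrib mult_ac)
  also have "real_of_int q ^ (n + 3) * (real_of_int q powr \<delta>) ^ n = real_of_int q powr (real n + 3 + real n * \<delta>)"
    using \<open>q \<ge> 1\<close> powr_realpow[of "real_of_int q" "n + 3"] by (simp add: powr_power powr_add)
  finally show ?thesis .
qed

theorem mainTheorem5:
  fixes n :: nat and \<epsilon> \<eta> :: real
  assumes "n \<ge> 2" and "0 < \<epsilon>" and "\<epsilon> < 1" and "\<eta> > 0"
  shows "\<exists>C. \<forall>i0 j0 (X :: int) (Y :: int) (c :: nat \<Rightarrow> int) (q :: int).
     i0 \<le> n \<longrightarrow> j0 \<le> n \<longrightarrow> X \<ge> 1 \<longrightarrow> q \<ge> 1 \<longrightarrow>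
     (let F = (\<lambda>x. \<Sum>a'\<in>PiE {0..n} (\<lambda>j. if j = j0 then {Y mod q} else {0..<q}).
                    w_low n i0 \<epsilon> x * cmod (Sq n q x a' c));
          A = PiE {0..n} (\<lambda>i. if i = i0 then {X} else UNIV)
      in F summable_on A \<and>
         infsum F A \<le> C * real_of_int q powr (real n + 3 + \<eta>) * real_of_int X ^ n)"
proof -
  define \<delta> where "\<delta> = \<eta> / real n"
  have "\<delta> > 0" "real n * \<delta> = \<eta>"
    using assms by (simp_all add: \<delta>_def)
  obtain Cd where Cd: "\<And>q. q > 0 \<Longrightarrow> real (divisor_count q) \<le> Cd * real q powr \<delta>"
    using divisor_count_le_powr[OF \<open>\<delta> > 0\<close>] by blast
  define B where "B = (2 * \<bar>inverse c0\<bar>) ^ (2 * n)"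
  have bound: "B * real_of_int q ^ (n + 3) * (2 * real_of_int X * real (divisor_count (nat q))) ^ n
      \<le> B * (2 * Cd) ^ n * real_of_int q powr (real n + 3 + \<eta>) * real_of_int X ^ n"
    if "X \<ge> 1" "q \<ge> 1" for X q :: int
    using mult_left_mono[OF divisor_count_bound_power_le_powr[where n = n, OF Cd that], of B]
    unfolding \<open>real n * \<delta> = \<eta>\<close> by (simp add: B_def mult_ac)
  show ?thesis
    using sum_w_low_Sq_le[where n = n, OF \<open>0 < \<epsilon>\<close>, folded B_def] bound
    unfolding Let_def by (intro exI[of _ "B * (2 * Cd) ^ n"] allI impI) (meson order_trans)
qed

end
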